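(* Let $d\ge 1$ and let $X_1, X_2 \subset \mathbb{R}^d$ be finite nonempty sets of signals. For $\mathbf{x}=(x_1,\dots,x_d)$ and $0\le s\le d-1$ let $\mathbf{x}^s=(x_{s+1},x_{s+2},\dots,x_d,x_1,\dots,x_s)$ be its circular shift by $s$, and let $S_i=\{\mathbf{x}^s : \mathbf{x}\in X_i,\ 0\le s\le d-1\}$ for $i=1,2$. Let $f_{dc}(\mathbf{x})=\frac{1}{\sqrt d}\sum_{i=1}^d x_i$ and $\bar{\mathbf{w}}=\frac{1}{\sqrt d}\mathbf{1}_d$. Then $S_1$ and $S_2$ are linearly separable if and only if $\max_{\mathbf{x}_1\in S_1} f_{dc}(\mathbf{x}_1) < \min_{\mathbf{x}_2\in S_2} f_{dc}(\mathbf{x}_2)$ or $\max_{\mathbf{x}_2\in S_2} f_{dc}(\mathbf{x}_2) < \min_{\mathbf{x}_1\in S_1} f_{dc}(\mathbf{x}_1)$. Furthermore, if they are linearly separable and the first inequality holds, then the maximum margin equals $\min_{\mathbf{x}_2\in S_2} f_{dc}(\mathbf{x}_2)-\max_{\mathbf{x}_1\in S_1} f_{dc}(\mathbf{x}_1)$ (and symmetrically, with the roles of $S_1,S_2$ exchanged, if the second inequality holds), and this maximum margin is attained by a separating hyperplane with normal vector $\bar{\mathbf{w}}$.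
   Context: Two finite sets $A,B\subset\mathbb{R}^d$ are linearly separable if there exist a unit vector $\mathbf{w}\in\mathbb{R}^d$ and a threshold $T\in\mathbb{R}$ such that $\mathbf{w}^T\mathbf{a}<T<\mathbf{w}^T\mathbf{b}$ for all $\mathbf{a}\in A,\mathbf{b}\in B$, or the same with $A$ and $B$ exchanged. For a unit vector $\mathbf{w}$ with $A$ on the low side, the margin of $\mathbf{w}$ is $\min_{\mathbf{b}\in B}\mathbf{w}^T\mathbf{b}-\max_{\mathbf{a}\in A}\mathbf{w}^T\mathbf{a}$; the maximum margin is the supremum of this quantity over unit vectors $\mathbf{w}$. $\mathbf{1}_d$ denotes the all-ones vector in $\mathbb{R}^d$. *)

theory Defs
  imports "HOL-Analysis.Analysis"
begin

text \<open>Vectors of R^d are represented as functions nat => real that vanish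
  outside the index range {0..<d} (0-based indices).\<close>

definition vecs :: "nat \<Rightarrow> (nat \<Rightarrow> real) set" where
  "vecs d = {x. \<forall>i\<ge>d. x i = 0}"

definition ip :: "nat \<Rightarrow> (nat \<Rightarrow> real) \<Rightarrow> (nat \<Rightarrow> real) \<Rightarrow> real" where
  "ip d w x = (\<Sum>i<d. w i * x i)"

definition unit_vec :: "nat \<Rightarrow> (nat \<Rightarrow> real) \<Rightarrow> bool" where
  "unit_vec d w \<longleftrightarrow> w \<in> vecs d \<and> sqrt (ip d w w) = 1"

text \<open>Circular shift by s: (x^s)_i = x_{(i+s) mod d} (0-based), i.e.
  x^s = (x_{s+1},...,x_d,x_1,...,x_s) in 1-based notation.\<close>
definition cshift :: "nat \<Rightarrow> nat \<Rightarrow> (nat \<Rightarrow> real) \<Rightarrow> (nat \<Rightarrow> real)" where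
  "cshift d s x = (\<lambda>i. if i < d then x ((i + s) mod d) else 0)"

definition shifts :: "nat \<Rightarrow> (nat \<Rightarrow> real) set \<Rightarrow> (nat \<Rightarrow> real) set" where
  "shifts d X = {cshift d s x | x s. x \<in> X \<and> s < d}"

definition f_dc :: "nat \<Rightarrow> (nat \<Rightarrow> real) \<Rightarrow> real" where
  "f_dc d x = (\<Sum>i<d. x i) / sqrt (real d)"

definition wbar :: "nat \<Rightarrow> (nat \<Rightarrow> real)" where
  "wbar d = (\<lambda>i. if i < d then 1 / sqrt (real d) else 0)"

definition lin_sep :: "nat \<Rightarrow> (nat \<Rightarrow> real) set \<Rightarrow> (nat \<Rightarrow> real) set \<Rightarrow> bool" where
  "lin_sep d A B \<longleftrightarrow> (\<exists>w T. unit_vec d w \<and>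
     ((\<forall>a\<in>A. \<forall>b\<in>B. ip d w a < T \<and> T < ip d w b) \<or>
      (\<forall>a\<in>A. \<forall>b\<in>B. ip d w b < T \<and> T < ip d w a)))"

definition margin :: "nat \<Rightarrow> (nat \<Rightarrow> real) set \<Rightarrow> (nat \<Rightarrow> real) set \<Rightarrow> (nat \<Rightarrow> real) \<Rightarrow> real" where
  "margin d A B w = Min (ip d w ` B) - Max (ip d w ` A)"

definition max_margin :: "nat \<Rightarrow> (nat \<Rightarrow> real) set \<Rightarrow> (nat \<Rightarrow> real) set \<Rightarrow> real" where
  "max_margin d A B = (SUP w\<in>{w. unit_vec d w}. margin d A B w)"

end

theory Submission
  imports Defs "HOL-Number_Theory.Cong"
begin

text \<open>Averaging a linear functional w over the d circular shifts of a signal x gives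
  \<open>\<Sum>\<^sub>s \<langle>w, x\<^sup>s\<rangle> = (\<Sum>\<^sub>i w\<^sub>i)(\<Sum>\<^sub>i x\<^sub>i) = \<surd>d W f_dc(x)\<close>, where
  \<open>W = \<Sum>\<^sub>i w\<^sub>i\<close>. Hence if w separates the shift sets, then \<open>W f_dc\<close> separates
  \<open>X\<^sub>1\<close> from \<open>X\<^sub>2\<close>, and since f_dc is invariant under shifts, f_dc separates the shift sets
  in one direction or the other. Conversely \<open>\<langle>w\<^sub>b\<^sub>a\<^sub>r, x\<rangle> = f_dc(x)\<close>. For the margin,
  pick x maximising f_dc on \<open>X\<^sub>1\<close> and y minimising it on \<open>X\<^sub>2\<close>; averaging over shifts,
  \<open>d \<cdot> margin(w) \<le> \<surd>d W (f_dc(y) - f_dc(x)) \<le> d (f_dc(y) - f_dc(x))\<close>, because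
  \<open>W \<le> \<surd>d\<close> for unit w by Cauchy-Schwarz.\<close>

lemma inj_on_add_mod: "inj_on (\<lambda>i. (i + s) mod d) {..<d::nat}"
proof (rule inj_onI)
  fix i j assume "i \<in> {..<d}" "j \<in> {..<d}" "(i + s) mod d = (j + s) mod d"
  then have "[s + i = s + j] (mod d)" "i < d" "j < d"
    by (simp_all add: cong_def add.commute)
  then show "i = j"
    by (simp add: cong_add_lcancel_nat cong_less_modulus_unique_nat)
qed

lemma sum_rotate: "(\<Sum>i<d. x ((i + s) mod d)) = (\<Sum>i<d::nat. x i)"
proof -
  have "(\<lambda>i. (i + s) mod d) ` {..<d} = {..<d}"
    by (intro endo_inj_surj inj_on_add_mod) auto
  then show ?thesis
    using sum.reindex[OF inj_on_add_mod, of x s d] by simp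
qed

lemma sum_cshift: "(\<Sum>i<d. cshift d s x i) = (\<Sum>i<d. x i)"
  by (simp add: cshift_def sum_rotate)

lemma f_dc_cshift: "f_dc d (cshift d s x) = f_dc d x"
  by (simp add: f_dc_def sum_cshift)

lemma sum_ip_cshift: "(\<Sum>s<d. ip d w (cshift d s x)) = sqrt (real d) * (\<Sum>i<d. w i) * f_dc d x"
proof -
  have "(\<Sum>s<d. ip d w (cshift d s x)) = (\<Sum>i<d. w i * (\<Sum>s<d. x ((s + i) mod d)))"
    unfolding ip_def cshift_def sum_distrib_left
    by (subst sum.swap) (simp add: add.commute)
  also have "\<dots> = (\<Sum>i<d. w i) * (\<Sum>i<d. x i)"
    by (simp add: sum_rotate sum_distrib_right)
  also have "(\<Sum>i<d. x i) = sqrt (real d) * f_dc d x"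
    by (cases "d = 0") (simp_all add: f_dc_def)
  finally show ?thesis by simp
qed

lemma sum_le_sqrt_if_unit_vec:
  assumes "unit_vec d w"
  shows "(\<Sum>i<d. w i) \<le> sqrt (real d)"
proof -
  have "(\<Sum>i<d. (w i)\<^sup>2) = 1"
    using assms by (simp add: unit_vec_def ip_def power2_eq_square)
  then have "(\<Sum>i<d. w i)\<^sup>2 \<le> real d"
    using sum_squared_le_sum_of_squares[of w "{..<d}"] by simp
  then show ?thesis
    by (rule real_le_rsqrt)
qed

lemma ip_wbar: "ip d (wbar d) = f_dc d"
  by (simp add: fun_eq_iff ip_def wbar_def f_dc_def sum_divide_distrib)

lemma unit_vec_wbar: "0 < d \<Longrightarrow> unit_vec d (wbar d)"
  by (simp add: unit_vec_def vecs_def wbar_def ip_def)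

lemma cshift_in_shifts: "x \<in> X \<Longrightarrow> s < d \<Longrightarrow> cshift d s x \<in> shifts d X"
  by (auto simp: shifts_def)

lemma finite_shifts:
  assumes "finite X"
  shows "finite (shifts d X)"
proof -
  have "shifts d X = (\<lambda>(x, s). cshift d s x) ` (X \<times> {..<d})"
    by (auto simp: shifts_def)
  then show ?thesis
    using assms by simp
qed

lemma f_dc_image_shifts: "0 < d \<Longrightarrow> f_dc d ` shifts d X = f_dc d ` X"
  by (force simp: shifts_def f_dc_cshift image_iff)

lemma f_dc_separates_if_separates_shifts:
  assumes "0 < d"
    and sep: "\<forall>a\<in>shifts d A. \<forall>b\<in>shifts d B. ip d w a < T \<and> T < ip d w b"
  shows "(\<forall>x\<in>A. \<forall>y\<in>B. f_dc d x < f_dc d y) \<or> (\<forall>x\<in>A. \<forall>y\<in>B. f_dc d y < f_dc d x)"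
proof -
  let ?W = "\<Sum>i<d. w i"
  have "?W * f_dc d x < ?W * f_dc d y" if x: "x \<in> A" and y: "y \<in> B" for x y
  proof -
    have shifted: "ip d w (cshift d s x) < ip d w (cshift d s y)" if "s < d" for s
      using sep cshift_in_shifts[OF x that] cshift_in_shifts[OF y that] by fastforce
    have "sqrt (real d) * ?W * f_dc d x = (\<Sum>s<d. ip d w (cshift d s x))"
      by (rule sum_ip_cshift[symmetric])
    also have "\<dots> < (\<Sum>s<d. ip d w (cshift d s y))"
      using shifted \<open>0 < d\<close> by (intro sum_strict_mono) auto
    also have "\<dots> = sqrt (real d) * ?W * f_dc d y"
      by (rule sum_ip_cshift)
    finally show ?thesis
      using \<open>0 < d\<close> by (simp add: mult.assoc)
  qed
  then show ?thesis
    by (cases "0 < ?W") (auto simp: mult_less_cancel_left)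
qed

lemma margin_shifts_le:
  assumes "0 < d" "finite A" "finite B" "x \<in> A" "y \<in> B"
    and w: "unit_vec d w" and xy: "f_dc d x \<le> f_dc d y"
  shows "margin d (shifts d A) (shifts d B) w \<le> f_dc d y - f_dc d x"
proof -
  have "real d * margin d (shifts d A) (shifts d B) w
      = (\<Sum>s<d. Min (ip d w ` shifts d B) - Max (ip d w ` shifts d A))"
    by (simp add: margin_def)
  also have "\<dots> \<le> (\<Sum>s<d. ip d w (cshift d s y) - ip d w (cshift d s x))"
    using assms by (intro sum_mono diff_mono Min_le Max_ge) (auto intro: finite_shifts cshift_in_shifts)
  also have "\<dots> = sqrt (real d) * (\<Sum>i<d. w i) * (f_dc d y - f_dc d x)"
    by (simp add: sum_subtractf sum_ip_cshift right_diff_distrib)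
  also have "\<dots> \<le> sqrt (real d) * sqrt (real d) * (f_dc d y - f_dc d x)"
    using sum_le_sqrt_if_unit_vec[OF w] xy by (intro mult_right_mono mult_left_mono) auto
  finally show ?thesis
    using \<open>0 < d\<close> by simp
qed

lemma margin_wbar_shifts:
  "0 < d \<Longrightarrow> margin d (shifts d A) (shifts d B) (wbar d) = Min (f_dc d ` B) - Max (f_dc d ` A)"
  by (simp add: margin_def ip_wbar f_dc_image_shifts)

lemma max_margin_shifts:
  assumes "0 < d" "finite A" "finite B" "A \<noteq> {}" "B \<noteq> {}"
    and le: "Max (f_dc d ` A) \<le> Min (f_dc d ` B)"
  shows "max_margin d (shifts d A) (shifts d B) = Min (f_dc d ` B) - Max (f_dc d ` A)"
  unfolding max_margin_def
proof (rule cSup_eq_maximum)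
  have "margin d (shifts d A) (shifts d B) (wbar d)
      \<in> margin d (shifts d A) (shifts d B) ` {w. unit_vec d w}"
    using unit_vec_wbar[OF \<open>0 < d\<close>] by simp
  then show "Min (f_dc d ` B) - Max (f_dc d ` A)
      \<in> margin d (shifts d A) (shifts d B) ` {w. unit_vec d w}"
    by (simp only: margin_wbar_shifts[OF \<open>0 < d\<close>])
next
  fix m assume "m \<in> margin d (shifts d A) (shifts d B) ` {w. unit_vec d w}"
  then obtain w where w: "unit_vec d w" and m: "m = margin d (shifts d A) (shifts d B) w"
    by blast
  have "Max (f_dc d ` A) \<in> f_dc d ` A" "Min (f_dc d ` B) \<in> f_dc d ` B"
    using assms by (intro Max_in Min_in; simp)+
  then obtain x y where "Max (f_dc d ` A) = f_dc d x" "x \<in> A" "Min (f_dc d ` B) = f_dc d y" "y \<in> B"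
    by (elim imageE)
  then show "m \<le> Min (f_dc d ` B) - Max (f_dc d ` A)"
    using margin_shifts_le[OF \<open>0 < d\<close> \<open>finite A\<close> \<open>finite B\<close> _ _ w] le m by simp
qed

lemma wbar_separates_shifts:
  assumes "0 < d" "finite A" "finite B" and lt: "Max (f_dc d ` A) < Min (f_dc d ` B)"
  shows "\<exists>T. \<forall>a\<in>shifts d A. \<forall>b\<in>shifts d B. ip d (wbar d) a < T \<and> T < ip d (wbar d) b"
proof (intro exI ballI)
  fix a b assume "a \<in> shifts d A" "b \<in> shifts d B"
  then have "f_dc d a \<in> f_dc d ` A" "f_dc d b \<in> f_dc d ` B"
    using f_dc_image_shifts[OF \<open>0 < d\<close>] by blast+
  then have "f_dc d a \<le> Max (f_dc d ` A)" "Min (f_dc d ` B) \<le> f_dc d b"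
    using assms by simp_all
  then show "ip d (wbar d) a < (Max (f_dc d ` A) + Min (f_dc d ` B)) / 2 \<and>
      (Max (f_dc d ` A) + Min (f_dc d ` B)) / 2 < ip d (wbar d) b"
    using lt by (simp add: ip_wbar)
qed

lemma lin_sep_shifts_iff:
  assumes "0 < d" "finite A" "finite B" "A \<noteq> {}" "B \<noteq> {}"
  shows "lin_sep d (shifts d A) (shifts d B) \<longleftrightarrow>
    Max (f_dc d ` A) < Min (f_dc d ` B) \<or> Max (f_dc d ` B) < Min (f_dc d ` A)"
proof
  assume "lin_sep d (shifts d A) (shifts d B)"
  then obtain w T where
    "(\<forall>a\<in>shifts d A. \<forall>b\<in>shifts d B. ip d w a < T \<and> T < ip d w b) \<or>
     (\<forall>a\<in>shifts d B. \<forall>b\<in>shifts d A. ip d w a < T \<and> T < ip d w b)"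
    unfolding lin_sep_def by blast
  then have "(\<forall>x\<in>A. \<forall>y\<in>B. f_dc d x < f_dc d y) \<or> (\<forall>x\<in>A. \<forall>y\<in>B. f_dc d y < f_dc d x)"
    using f_dc_separates_if_separates_shifts[OF \<open>0 < d\<close>] by blast
  then show "Max (f_dc d ` A) < Min (f_dc d ` B) \<or> Max (f_dc d ` B) < Min (f_dc d ` A)"
    using assms by auto
next
  assume "Max (f_dc d ` A) < Min (f_dc d ` B) \<or> Max (f_dc d ` B) < Min (f_dc d ` A)"
  then show "lin_sep d (shifts d A) (shifts d B)"
    using wbar_separates_shifts[of d A B] wbar_separates_shifts[of d B A]
      unit_vec_wbar[OF \<open>0 < d\<close>] assms(1-3)
    unfolding lin_sep_def by blast
qed

lemma wbar_attains_max_margin_shifts: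
  assumes "0 < d" "finite A" "finite B" "A \<noteq> {}" "B \<noteq> {}"
    and lt: "Max (f_dc d ` A) < Min (f_dc d ` B)"
  shows "max_margin d (shifts d A) (shifts d B) = Min (f_dc d ` B) - Max (f_dc d ` A)
    \<and> unit_vec d (wbar d)
    \<and> (\<exists>T. \<forall>a\<in>shifts d A. \<forall>b\<in>shifts d B. ip d (wbar d) a < T \<and> T < ip d (wbar d) b)
    \<and> margin d (shifts d A) (shifts d B) (wbar d) = max_margin d (shifts d A) (shifts d B)"
  using max_margin_shifts[OF assms(1-5) less_imp_le[OF lt]] unit_vec_wbar[OF \<open>0 < d\<close>]
    wbar_separates_shifts[OF assms(1-3) lt] margin_wbar_shifts[OF \<open>0 < d\<close>]
  by simp

theorem theorem1:
  fixes d :: nat and X1 X2 :: "(nat \<Rightarrow> real) set"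
  assumes "d \<ge> 1"
    and "finite X1" "finite X2" "X1 \<noteq> {}" "X2 \<noteq> {}"
    and "X1 \<subseteq> vecs d" "X2 \<subseteq> vecs d"
  shows "(lin_sep d (shifts d X1) (shifts d X2) \<longleftrightarrow>
            Max (f_dc d ` shifts d X1) < Min (f_dc d ` shifts d X2) \<or>
            Max (f_dc d ` shifts d X2) < Min (f_dc d ` shifts d X1))
       \<and> (lin_sep d (shifts d X1) (shifts d X2) \<and>
            Max (f_dc d ` shifts d X1) < Min (f_dc d ` shifts d X2) \<longrightarrow>
            max_margin d (shifts d X1) (shifts d X2)
              = Min (f_dc d ` shifts d X2) - Max (f_dc d ` shifts d X1)
          \<and> unit_vec d (wbar d)
          \<and> (\<exists>T. \<forall>a\<in>shifts d X1. \<forall>b\<in>shifts d X2.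
                 ip d (wbar d) a < T \<and> T < ip d (wbar d) b)
          \<and> margin d (shifts d X1) (shifts d X2) (wbar d)
              = max_margin d (shifts d X1) (shifts d X2))
       \<and> (lin_sep d (shifts d X1) (shifts d X2) \<and>
            Max (f_dc d ` shifts d X2) < Min (f_dc d ` shifts d X1) \<longrightarrow>
            max_margin d (shifts d X2) (shifts d X1)
              = Min (f_dc d ` shifts d X1) - Max (f_dc d ` shifts d X2)
          \<and> unit_vec d (wbar d)
          \<and> (\<exists>T. \<forall>a\<in>shifts d X2. \<forall>b\<in>shifts d X1.
                 ip d (wbar d) a < T \<and> T < ip d (wbar d) b)
          \<and> margin d (shifts d X2) (shifts d X1) (wbar d)
              = max_margin d (shifts d X2) (shifts d X1))"
proof -
  have "0 < d"
    using \<open>d \<ge> 1\<close> by simp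
  note fin = \<open>finite X1\<close> \<open>finite X2\<close> and ne = \<open>X1 \<noteq> {}\<close> \<open>X2 \<noteq> {}\<close>
  show ?thesis
    unfolding f_dc_image_shifts[OF \<open>0 < d\<close>]
    using lin_sep_shifts_iff[OF \<open>0 < d\<close> fin ne]
      wbar_attains_max_margin_shifts[OF \<open>0 < d\<close> fin ne]
      wbar_attains_max_margin_shifts[OF \<open>0 < d\<close> fin(2,1) ne(2,1)]
    by blast
qed

end
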